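(* Let $n\ge2$, $m\ge1$, $\lambda_0\ne0$, $\lambda_1>0$, $\lambda_2\ge0$, $\omega\in\mathbb{R}$, and run a PIFO algorithm with initial point $x_0=0$ and sampling probabilities $(p_1,\dots,p_n)$ on the components $f_i=r_i(\cdot;\lambda_0,\lambda_1,\lambda_2,m,\omega)$, $i=1,\dots,n$. Define $T_0=0$ and, for $k\ge1$, $T_k=\min\{t:t>T_{k-1},\ i_t\equiv k\pmod n\}$. Then for every $1\le k\le m$ and every $t<T_k$ we have $x_t\in\mathcal{F}_{k-1}$. Moreover, for every $k\ge1$, $T_k=\sum_{l=1}^kY_l$ where $Y_1,\dots,Y_k$ are independent and $Y_l$ is geometrically distributed with success probability $q_l=p_{l'}$, where $l'\in\{1,\dots,n\}$ and $l'\equiv l\pmod n$ (a geometric variable with success probability $0$ is $+\infty$ almost surely).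
   Context: For $\omega\in\mathbb{R}$, $B(m,\omega)\in\mathbb{R}^{m\times m}$ is the matrix whose row $l$, for $1\le l\le m-1$, has entry $-1$ in column $m-l$ and entry $1$ in column $m-l+1$, and whose row $m$ is $\omega e_1^\top$; $b_l(m,\omega)^\top$ is its $l$-th row. $\mathcal{L}_i=\{l:1\le l\le m,\ l\equiv i-1\pmod n\}$. $r_1(x)=\lambda_1\sum_{l\in\mathcal{L}_1}(b_l(m,\omega)^\top x)^2+\lambda_2\|x\|_2^2-\lambda_0\langle e_m,x\rangle$ and $r_i(x)=\lambda_1\sum_{l\in\mathcal{L}_i}(b_l(m,\omega)^\top x)^2+\lambda_2\|x\|_2^2$ for $i\ge2$, $x\in\mathbb{R}^m$. $\mathcal{F}_0=\{0\}$, $\mathcal{F}_k=\mathrm{span}\{e_m,\dots,e_{m-k+1}\}$. A random variable $Y$ is geometric with success probability $p$ if $\mathbb{P}(Y=s)=(1-p)^{s-1}p$ for $s=1,2,\dots$. For $\gamma>0$, $\mathrm{prox}^{\gamma}_g(x)=\arg\min_u\{g(u)+\frac{1}{2\gamma}\|x-u\|_2^2\}$. PIFO algorithm: a probability vector $(p_1,\dots,p_n)$, initial point $x_0$, parameters $\gamma_t>0$; indices $i_1,i_2,\dots$ drawn independently with $\mathbb{P}(i_t=j)=p_j$; iterates $x_t\in\mathrm{span}\{x_0,\dots,x_{t-1},\nabla f_{i_1}(x_0),\dots,\nabla f_{i_t}(x_{t-1}),\mathrm{prox}^{\gamma_1}_{f_{i_1}}(x_0),\dots,\mathrm{prox}^{\gamma_t}_{f_{i_t}}(x_{t-1})\}$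 for $t\ge1$. *)

theory Defs
  imports "HOL-Probability.Probability"
begin

text \<open>Vectors of R^m are represented as functions nat => real, with coordinates
  indexed by 1..m and vanishing outside {1..m}.\<close>

definition vecs :: "nat \<Rightarrow> (nat \<Rightarrow> real) set" where
  "vecs m = {x. \<forall>j. j \<notin> {1..m} \<longrightarrow> x j = 0}"

definition ip :: "nat \<Rightarrow> (nat \<Rightarrow> real) \<Rightarrow> (nat \<Rightarrow> real) \<Rightarrow> real" where
  "ip m x y = (\<Sum>j=1..m. x j * y j)"

definition ev :: "nat \<Rightarrow> nat \<Rightarrow> real" where
  "ev j = (\<lambda>i. if i = j then 1 else 0)"

definition lin_span :: "(nat \<Rightarrow> real) set \<Rightarrow> (nat \<Rightarrow> real) set" where
  "lin_span S = {y. \<exists>F c. finite F \<and> F \<subseteq> S \<and> y = (\<lambda>j. \<Sum>v\<in>F. c v * v j)}"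

definition brow :: "nat \<Rightarrow> real \<Rightarrow> nat \<Rightarrow> nat \<Rightarrow> real" where
  "brow m w l = (if l < m then (\<lambda>j. ev (m - l + 1) j - ev (m - l) j) else (\<lambda>j. w * ev 1 j))"

definition Lset :: "nat \<Rightarrow> nat \<Rightarrow> nat \<Rightarrow> nat set" where
  "Lset m n i = {l \<in> {1..m}. l mod n = (i - 1) mod n}"

definition rfun :: "real \<Rightarrow> real \<Rightarrow> real \<Rightarrow> nat \<Rightarrow> real \<Rightarrow> nat \<Rightarrow> nat \<Rightarrow> (nat \<Rightarrow> real) \<Rightarrow> real" where
  "rfun l0 l1 l2 m w n i x =
     l1 * (\<Sum>l\<in>Lset m n i. (ip m (brow m w l) x)\<^sup>2) + l2 * ip m x x
     - (if i = 1 then l0 * ip m (ev m) x else 0)"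

definition Fsp :: "nat \<Rightarrow> nat \<Rightarrow> (nat \<Rightarrow> real) set" where
  "Fsp m k = lin_span {ev j | j. m - k < j \<and> j \<le> m}"

definition grad :: "nat \<Rightarrow> ((nat \<Rightarrow> real) \<Rightarrow> real) \<Rightarrow> (nat \<Rightarrow> real) \<Rightarrow> (nat \<Rightarrow> real)" where
  "grad m f x = (THE g. g \<in> vecs m \<and>
      (\<forall>v\<in>vecs m. ((\<lambda>t. f (\<lambda>j. x j + t * v j)) has_real_derivative ip m g v) (at 0)))"

definition prox :: "nat \<Rightarrow> real \<Rightarrow> ((nat \<Rightarrow> real) \<Rightarrow> real) \<Rightarrow> (nat \<Rightarrow> real) \<Rightarrow> (nat \<Rightarrow> real)" where
  "prox m \<gamma> g x = (THE u. u \<in> vecs m \<and>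
      (\<forall>v\<in>vecs m. g u + ip m (\<lambda>j. x j - u j) (\<lambda>j. x j - u j) / (2 * \<gamma>)
                  < g v + ip m (\<lambda>j. x j - v j) (\<lambda>j. x j - v j) / (2 * \<gamma>) \<or> v = u))"

primrec Tk :: "nat \<Rightarrow> (nat \<Rightarrow> 'a \<Rightarrow> nat) \<Rightarrow> nat \<Rightarrow> 'a \<Rightarrow> enat" where
  "Tk n idx 0 \<omega> = 0"
| "Tk n idx (Suc k) \<omega> =
     (if \<exists>t. enat t > Tk n idx k \<omega> \<and> idx t \<omega> mod n = Suc k mod n
      then enat (LEAST t. enat t > Tk n idx k \<omega> \<and> idx t \<omega> mod n = Suc k mod n)
      else \<infinity>)"

text \<open>Y is geometric with success probability q: P(Y = s) = (1-q)^(s-1) q for s = 1,2,...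
  (for q = 0 this forces Y = infinity almost surely)\<close>
definition geometric_rv :: "'b measure \<Rightarrow> real \<Rightarrow> ('b \<Rightarrow> enat) \<Rightarrow> bool" where
  "geometric_rv N q Y \<longleftrightarrow> Y \<in> measurable N (count_space UNIV) \<and>
     (\<forall>s::nat. measure N {\<omega> \<in> space N. Y \<omega> = enat s} = (if 1 \<le> s then (1 - q) ^ (s - 1) * q else 0))"

end

theory Submission
  imports Defs
begin

text \<open>
  Each component r_i couples only the coordinate pairs (m - l, m - l + 1) with l in L_i, and only r_1
  has a linear term, along e_m. Hence, if x is supported on the last b coordinates, the gradient and
  the proximal point of r_i at x stay supported there unless i = b + 1 (mod n): for the gradient by
  direct computation, for the proximal point because zeroing the other coordinates does not increase
  the strictly convex proximal objective. A new coordinate can therefore only be reached at the times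
  T_k, and the span statement follows by induction on t.

  For the law of T_k, independence of the disjoint blocks of indices i_1, ..., i_r and
  i_(r+1), ..., i_s gives P(T_k = s) = \<Sum>_(r<s) P(T_(k-1) = r) (1 - q_k)^(s-r-1) q_k, which is also
  the recursion satisfied by partial sums of independent geometric variables; these are realised as
  the coordinates of a product pmf.
\<close>

section \<open>Support of gradients and proximal points\<close>

definition last_coords :: "nat \<Rightarrow> nat \<Rightarrow> (nat \<Rightarrow> real) set" where
  "last_coords m b = {y. \<forall>j. (j \<le> m - b \<or> m < j) \<longrightarrow> y j = 0}"

lemma last_coords_subset_vecs: "last_coords m b \<subseteq> vecs m"
  unfolding last_coords_def vecs_def by auto

lemma last_coords_mono: "b \<le> b' \<Longrightarrow> last_coords m b \<subseteq> last_coords m b'"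
  unfolding last_coords_def by auto

lemma lin_span_vanishing:
  assumes "\<forall>v\<in>S. \<forall>j\<in>R. v j = 0" "y \<in> lin_span S" "j \<in> R"
  shows "y j = 0"
proof -
  from assms(2) obtain F c where F: "finite F" "F \<subseteq> S" "y = (\<lambda>j. \<Sum>v\<in>F. c v * v j)"
    unfolding lin_span_def by blast
  have "(\<Sum>v\<in>F. c v * v j) = 0" using F assms(1,3) by (intro sum.neutral) auto
  then show ?thesis using F by simp
qed

lemma lin_span_last_coords:
  assumes "S \<subseteq> last_coords m b" "y \<in> lin_span S"
  shows "y \<in> last_coords m b"
  using lin_span_vanishing[of S "{j. j \<le> m - b \<or> m < j}" y] assms unfolding last_coords_def by blast

lemma last_coords_subset_Fsp: "last_coords m b \<subseteq> Fsp m b"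
proof
  fix y assume y: "y \<in> last_coords m b"
  define J where "J = {m - b<..m}"
  define c where "c v = (\<Sum>j\<in>J. v j * y j)" for v
  have inj: "inj_on ev J" by (rule inj_onI) (auto simp: ev_def fun_eq_iff split: if_splits)
  have c_ev: "c (ev j) = y j" if "j \<in> J" for j
  proof -
    have "c (ev j) = (\<Sum>j'\<in>J. if j' = j then y j' else 0)"
      unfolding c_def by (intro sum.cong) (auto simp: ev_def)
    then show ?thesis using that J_def by (simp add: sum.delta')
  qed
  have "y = (\<lambda>i. \<Sum>v\<in>ev ` J. c v * v i)"
  proof
    fix i
    have "(\<Sum>v\<in>ev ` J. c v * v i) = (\<Sum>j\<in>J. c (ev j) * ev j i)"
      by (rule sum.reindex[OF inj, unfolded comp_def])
    also have "\<dots> = (\<Sum>j\<in>J. if j = i then y j else 0)"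
      using c_ev by (intro sum.cong) (auto simp: ev_def)
    also have "\<dots> = y i" using y unfolding last_coords_def J_def by (auto simp: sum.delta)
    finally show "y i = (\<Sum>v\<in>ev ` J. c v * v i)" by simp
  qed
  moreover have "ev ` J \<subseteq> {ev j | j. m - b < j \<and> j \<le> m}" unfolding J_def by auto
  ultimately show "y \<in> Fsp m b" unfolding Fsp_def lin_span_def J_def by blast
qed

lemma ip_commute: "ip m u v = ip m v u"
  unfolding ip_def by (simp add: mult.commute)

lemma ip_add_scaled_right: "ip m u (\<lambda>j. x j + t * v j) = ip m u x + t * ip m u v"
  unfolding ip_def by (simp add: algebra_simps sum.distrib sum_distrib_left)

lemma ip_add_scaled_self:
  "ip m (\<lambda>j. x j + t * v j) (\<lambda>j. x j + t * v j) = ip m x x + 2 * t * ip m x v + t\<^sup>2 * ip m v v"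
  unfolding ip_def by (simp add: algebra_simps sum.distrib sum_distrib_left power2_eq_square)

lemma ip_ev_right: "j \<in> {1..m} \<Longrightarrow> ip m v (ev j) = v j"
  unfolding ip_def ev_def by (simp add: sum.delta' if_distrib cong: if_cong)

lemma ip_self_nonneg: "ip m d d \<ge> 0"
  unfolding ip_def by (intro sum_nonneg) auto

lemma ip_self_pos:
  assumes "d \<in> vecs m" "d \<noteq> (\<lambda>_. 0)"
  shows "ip m d d > 0"
proof -
  obtain j where j: "d j \<noteq> 0" using assms(2) by auto
  then have "j \<in> {1..m}" using assms(1) unfolding vecs_def by auto
  then show ?thesis unfolding ip_def
    by (rule sum_pos2[rotated]) (use j in \<open>auto simp: zero_less_mult_iff linorder_neq_iff\<close>)
qed

lemma square_le_ip_self: "j \<in> {1..m} \<Longrightarrow> (d j)\<^sup>2 \<le> ip m d d"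
  unfolding ip_def power2_eq_square by (rule member_le_sum) auto

lemma ev_in_vecs: "j \<in> {1..m} \<Longrightarrow> ev j \<in> vecs m"
  unfolding vecs_def ev_def by auto

lemma vecs_eqI:
  assumes "u \<in> vecs m" "v \<in> vecs m" "\<And>j. j \<in> {1..m} \<Longrightarrow> u j = v j"
  shows "u = v"
proof
  fix j show "u j = v j"
    by (cases "j \<in> {1..m}") (use assms in \<open>auto simp: vecs_def\<close>)
qed

lemma Lset_subset: "Lset m n i \<subseteq> {1..m}"
  unfolding Lset_def by auto

lemma brow_in_vecs: "l \<in> {1..m} \<Longrightarrow> brow m w l \<in> vecs m"
  unfolding vecs_def brow_def ev_def by auto

lemma ip_brow:
  assumes "l \<in> {1..m}"
  shows "ip m (brow m w l) x = (if l < m then x (m - l + 1) - x (m - l) else w * x 1)"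
proof (cases "l < m")
  case True
  then have "m - l + 1 \<in> {1..m}" "m - l \<in> {1..m}" using assms by auto
  moreover have "ip m (brow m w l) x = ip m x (ev (m - l + 1)) - ip m x (ev (m - l))"
    unfolding ip_def brow_def using True by (simp add: algebra_simps sum_subtractf)
  ultimately show ?thesis using True by (simp add: ip_ev_right)
next
  case False
  have "ip m (brow m w l) x = w * ip m x (ev 1)"
    unfolding ip_def brow_def using False by (simp add: algebra_simps sum_distrib_left)
  then show ?thesis using False assms by (simp add: ip_ev_right)
qed

definition rfun_grad :: "real \<Rightarrow> real \<Rightarrow> real \<Rightarrow> nat \<Rightarrow> real \<Rightarrow> nat \<Rightarrow> nat \<Rightarrow> (nat \<Rightarrow> real) \<Rightarrow> (nat \<Rightarrow> real)" where
  "rfun_grad l0 l1 l2 m w n i x = (\<lambda>j. 2 * l1 * (\<Sum>l\<in>Lset m n i. ip m (brow m w l) x * brow m w l j)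
      + 2 * l2 * x j - (if i = 1 then l0 * ev m j else 0))"

lemma rfun_grad_in_vecs:
  assumes "x \<in> vecs m" "m \<ge> 1"
  shows "rfun_grad l0 l1 l2 m w n i x \<in> vecs m"
proof -
  have "brow m w l j = 0" if "l \<in> Lset m n i" "j \<notin> {1..m}" for l j
    using brow_in_vecs[of l m w] that Lset_subset unfolding vecs_def by blast
  then show ?thesis using assms unfolding vecs_def rfun_grad_def by (auto simp: ev_def)
qed

lemma ip_rfun_grad:
  "ip m (rfun_grad l0 l1 l2 m w n i x) v
     = 2 * l1 * (\<Sum>l\<in>Lset m n i. ip m (brow m w l) x * ip m (brow m w l) v)
       + 2 * l2 * ip m x v - (if i = 1 then l0 * ip m (ev m) v else 0)"
proof -
  have "ip m (rfun_grad l0 l1 l2 m w n i x) v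
      = (\<Sum>j=1..m. 2 * l1 * (\<Sum>l\<in>Lset m n i. ip m (brow m w l) x * brow m w l j * v j))
        + (\<Sum>j=1..m. 2 * l2 * x j * v j) - (\<Sum>j=1..m. if i = 1 then l0 * ev m j * v j else 0)"
    unfolding ip_def rfun_grad_def
    by (cases "i = 1") (simp_all add: algebra_simps sum.distrib sum_subtractf sum_distrib_left sum_distrib_right)
  also have "(\<Sum>j=1..m. 2 * l1 * (\<Sum>l\<in>Lset m n i. ip m (brow m w l) x * brow m w l j * v j))
      = 2 * l1 * (\<Sum>l\<in>Lset m n i. ip m (brow m w l) x * ip m (brow m w l) v)"
    unfolding ip_def by (simp add: sum_distrib_left sum_distrib_right mult.assoc) (rule sum.swap)
  also have "(\<Sum>j=1..m. 2 * l2 * x j * v j) = 2 * l2 * ip m x v"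
    unfolding ip_def by (simp add: sum_distrib_left mult.assoc)
  also have "(\<Sum>j=1..m. if i = 1 then l0 * ev m j * v j else 0) = (if i = 1 then l0 * ip m (ev m) v else 0)"
    unfolding ip_def by (cases "i = 1") (simp_all add: sum_distrib_left mult.assoc)
  finally show ?thesis .
qed

lemma rfun_add_scaled:
  "rfun l0 l1 l2 m w n i (\<lambda>j. x j + t * v j)
     = rfun l0 l1 l2 m w n i x + t * ip m (rfun_grad l0 l1 l2 m w n i x) v
       + t\<^sup>2 * (l1 * (\<Sum>l\<in>Lset m n i. (ip m (brow m w l) v)\<^sup>2) + l2 * ip m v v)"
  unfolding rfun_def ip_rfun_grad ip_add_scaled_self ip_add_scaled_right
  by (simp add: algebra_simps power2_eq_square sum.distrib sum_distrib_left)

lemma grad_rfun: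
  assumes x: "x \<in> vecs m" and m: "m \<ge> 1"
  shows "grad m (rfun l0 l1 l2 m w n i) x = rfun_grad l0 l1 l2 m w n i x"
  unfolding grad_def
proof (rule the_equality)
  let ?f = "rfun l0 l1 l2 m w n i" and ?g = "rfun_grad l0 l1 l2 m w n i x"
  have D: "((\<lambda>t. ?f (\<lambda>j. x j + t * v j)) has_real_derivative ip m ?g v) (at 0)" for v
    unfolding rfun_add_scaled by (auto intro!: derivative_eq_intros)
  then show "?g \<in> vecs m \<and> (\<forall>v\<in>vecs m. ((\<lambda>t. ?f (\<lambda>j. x j + t * v j)) has_real_derivative ip m ?g v) (at 0))"
    using rfun_grad_in_vecs[OF x m] by simp
  fix g assume g: "g \<in> vecs m \<and> (\<forall>v\<in>vecs m. ((\<lambda>t. ?f (\<lambda>j. x j + t * v j)) has_real_derivative ip m g v) (at 0))"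
  show "g = ?g"
  proof (rule vecs_eqI)
    fix j assume j: "j \<in> {1..m}"
    have "ip m g (ev j) = ip m ?g (ev j)"
      using g ev_in_vecs[OF j] DERIV_unique[OF _ D[of "ev j"]] by blast
    then show "g j = ?g j" using j by (simp add: ip_ev_right)
  qed (use g rfun_grad_in_vecs[OF x m] in auto)
qed

lemma rfun_grad_last_coords:
  assumes x: "x \<in> last_coords m b" and bm: "b < m" and bL: "b \<notin> Lset m n i"
    and i1: "i = 1 \<Longrightarrow> b \<ge> 1"
  shows "rfun_grad l0 l1 l2 m w n i x \<in> last_coords m b"
  unfolding last_coords_def
proof (intro CollectI allI impI)
  fix j assume j: "j \<le> m - b \<or> m < j"
  have "ip m (brow m w l) x * brow m w l j = 0" if l: "l \<in> Lset m n i" for l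
  proof -
    have lm: "l \<in> {1..m}" using l Lset_subset by blast
    have lb: "l \<noteq> b" using l bL by blast
    consider "l < m" "l < b" | "l < m" "b < l" | "\<not> l < m" using lb by linarith
    then show ?thesis
    proof cases
      case 1
      then have "brow m w l j = 0" using j bm lm unfolding brow_def ev_def by auto
      then show ?thesis by simp
    next
      case 2
      then have "x (m - l + 1) = 0" "x (m - l) = 0" using x unfolding last_coords_def by auto
      then show ?thesis using ip_brow[OF lm] 2 by simp
    next
      case 3
      have "x 1 = 0" using x bm unfolding last_coords_def by auto
      then show ?thesis using ip_brow[OF lm] 3 by simp
    qed
  qed
  then have "(\<Sum>l\<in>Lset m n i. ip m (brow m w l) x * brow m w l j) = 0"
    by (intro sum.neutral) auto
  moreover have "x j = 0" using x j unfolding last_coords_def by auto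
  moreover have "(if i = 1 then l0 * ev m j else 0) = 0" using i1 j bm by (auto simp: ev_def)
  ultimately show "rfun_grad l0 l1 l2 m w n i x j = 0" unfolding rfun_grad_def by simp
qed

definition prox_objective :: "nat \<Rightarrow> real \<Rightarrow> ((nat \<Rightarrow> real) \<Rightarrow> real) \<Rightarrow> (nat \<Rightarrow> real) \<Rightarrow> (nat \<Rightarrow> real) \<Rightarrow> real" where
  "prox_objective m \<gamma> g x u = g u + ip m (\<lambda>j. x j - u j) (\<lambda>j. x j - u j) / (2 * \<gamma>)"

lemma prox_eqI:
  assumes "u \<in> vecs m" "\<forall>v\<in>vecs m. prox_objective m \<gamma> g x u < prox_objective m \<gamma> g x v \<or> v = u"
  shows "prox m \<gamma> g x = u"
  unfolding prox_def prox_objective_def[symmetric]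
proof (rule the_equality)
  fix u' assume "u' \<in> vecs m \<and> (\<forall>v\<in>vecs m. prox_objective m \<gamma> g x u' < prox_objective m \<gamma> g x v \<or> v = u')"
  then show "u' = u" using assms by force
qed (use assms in blast)

lemma continuous_coercive_attains_min_vecs:
  fixes \<Phi> :: "(nat \<Rightarrow> real) \<Rightarrow> real"
  assumes cont: "continuous_on UNIV \<Phi>" and x: "x \<in> vecs m" and R: "R \<ge> 0"
    and coercive: "\<And>v. v \<in> vecs m \<Longrightarrow> \<exists>j\<in>{1..m}. \<bar>v j - x j\<bar> > R \<Longrightarrow> \<Phi> v > \<Phi> x"
  obtains u where "u \<in> vecs m" "\<forall>v\<in>vecs m. \<Phi> u \<le> \<Phi> v"
proof -
  define S where "S j = (if j \<in> {1..m} then {x j - R..x j + R} else {0})" for j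
  have "compactin (product_topology (\<lambda>_. euclidean) UNIV) (PiE UNIV S)"
    by (subst compactin_PiE) (auto simp: S_def)
  then have K: "compact (PiE UNIV S)" by (simp add: euclidean_product_topology)
  have xK: "x \<in> PiE UNIV S" using x R unfolding S_def vecs_def by auto
  obtain u where u: "u \<in> PiE UNIV S" "\<forall>y\<in>PiE UNIV S. \<Phi> u \<le> \<Phi> y"
    using continuous_attains_inf[OF K _ continuous_on_subset[OF cont]] xK by blast
  have "\<Phi> u \<le> \<Phi> v" if v: "v \<in> vecs m" for v
  proof (cases "v \<in> PiE UNIV S")
    case False
    then obtain j where "v j \<notin> S j" by auto
    then have "j \<in> {1..m}" "\<bar>v j - x j\<bar> > R"
      using v unfolding S_def vecs_def by (auto split: if_splits)
    then have "\<Phi> v > \<Phi> x" using coercive v by blast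
    moreover have "\<Phi> u \<le> \<Phi> x" using u xK by blast
    ultimately show ?thesis by simp
  next
    case True
    then show ?thesis using u by blast
  qed
  moreover have "u \<in> vecs m" using u(1) unfolding S_def vecs_def by (auto split: if_splits)
  ultimately show ?thesis using that by blast
qed

lemma mult_le_sq_div_add_sq:
  fixes a c g :: real
  assumes "g > 0"
  shows "a * c \<le> a\<^sup>2 / (4 * g) + g * c\<^sup>2"
proof -
  have "0 \<le> (a - 2 * g * c)\<^sup>2" by simp
  then have "4 * g * (a * c) \<le> a\<^sup>2 + 4 * g * (g * c\<^sup>2)" by (simp add: power2_eq_square algebra_simps)
  then show ?thesis using assms by (simp add: field_simps)
qed

lemma ip_brow_truncate_square_le:
  assumes l: "l \<in> {1..m}" "l \<noteq> b" and bm: "b < m"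
  shows "(ip m (brow m w l) (\<lambda>j. if m - b < j then u j else 0))\<^sup>2 \<le> (ip m (brow m w l) u)\<^sup>2"
proof -
  let ?u' = "\<lambda>j. if m - b < j then u j else 0"
  consider "l < m" "l < b" | "l < m" "b < l" | "\<not> l < m" using l(2) by linarith
  then show ?thesis
  proof cases
    case 1
    then have "?u' (m - l + 1) = u (m - l + 1)" "?u' (m - l) = u (m - l)" by auto
    then show ?thesis using ip_brow[OF l(1), of w ?u'] ip_brow[OF l(1), of w u] 1 by simp
  next
    case 2
    then have "?u' (m - l + 1) = 0" "?u' (m - l) = 0" using l(1) by auto
    then show ?thesis using ip_brow[OF l(1), of w ?u'] 2 by simp
  next
    case 3
    then show ?thesis using ip_brow[OF l(1), of w ?u'] bm by simp
  qed
qed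

context
  fixes l0 l1 l2 w :: real and m n i :: nat and \<gamma> :: real and x :: "nat \<Rightarrow> real"
  assumes \<gamma>: "\<gamma> > 0" and l1: "l1 \<ge> 0" and l2: "l2 \<ge> 0"
begin

abbreviation \<Phi> :: "(nat \<Rightarrow> real) \<Rightarrow> real" where
  "\<Phi> \<equiv> prox_objective m \<gamma> (rfun l0 l1 l2 m w n i) x"

lemma prox_objective_rfun_add_scaled:
  "\<Phi> (\<lambda>j. u j + t * d j) = \<Phi> u
     + t * (ip m (rfun_grad l0 l1 l2 m w n i u) d - ip m (\<lambda>j. x j - u j) d / \<gamma>)
     + t\<^sup>2 * (l1 * (\<Sum>l\<in>Lset m n i. (ip m (brow m w l) d)\<^sup>2) + l2 * ip m d d + ip m d d / (2 * \<gamma>))"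
proof -
  have e: "(\<lambda>j. x j - (u j + t * d j)) = (\<lambda>j. (x j - u j) + t * (- d j))" by (simp add: algebra_simps)
  have n1: "ip m y (\<lambda>j. - d j) = - ip m y d" "ip m (\<lambda>j. - d j) y = - ip m d y" for y
    unfolding ip_def by (simp_all add: sum_negf)
  have n2: "ip m (\<lambda>j. - d j) (\<lambda>j. - d j) = ip m d d" unfolding ip_def by simp
  show ?thesis
    unfolding prox_objective_def rfun_add_scaled e ip_add_scaled_self n1 n2
    by (simp add: algebra_simps add_divide_distrib diff_divide_distrib)
qed

lemma prox_objective_rfun_midpoint_less:
  assumes "u \<in> vecs m" "v \<in> vecs m" "u \<noteq> v"
  shows "\<Phi> (\<lambda>j. (u j + v j) / 2) < (\<Phi> u + \<Phi> v) / 2"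
proof -
  define d where "d j = v j - u j" for j
  define A where "A = ip m (rfun_grad l0 l1 l2 m w n i u) d - ip m (\<lambda>j. x j - u j) d / \<gamma>"
  define B where "B = l1 * (\<Sum>l\<in>Lset m n i. (ip m (brow m w l) d)\<^sup>2) + l2 * ip m d d + ip m d d / (2 * \<gamma>)"
  have "d \<in> vecs m" using assms unfolding vecs_def d_def by auto
  moreover have "d \<noteq> (\<lambda>_. 0)" using assms(3) unfolding d_def by (force simp: fun_eq_iff)
  ultimately have "ip m d d / (2 * \<gamma>) > 0" using ip_self_pos \<gamma> by simp
  moreover have "l1 * (\<Sum>l\<in>Lset m n i. (ip m (brow m w l) d)\<^sup>2) \<ge> 0" "l2 * ip m d d \<ge> 0"
    using l1 l2 ip_self_nonneg by (auto intro!: mult_nonneg_nonneg sum_nonneg)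
  ultimately have "B > 0" unfolding B_def by linarith
  have "(\<lambda>j. (u j + v j) / 2) = (\<lambda>j. u j + (1/2) * d j)" "v = (\<lambda>j. u j + 1 * d j)"
    unfolding d_def by (auto simp: field_simps)
  then have "\<Phi> (\<lambda>j. (u j + v j) / 2) = \<Phi> u + (1/2) * A + (1/2)\<^sup>2 * B" "\<Phi> v = \<Phi> u + A + B"
    unfolding A_def B_def by (simp_all only: prox_objective_rfun_add_scaled) simp_all
  then show ?thesis using \<open>B > 0\<close> by (simp add: power2_eq_square field_simps)
qed

lemma prox_objective_rfun_lower_bound:
  assumes v: "v \<in> vecs m" and m: "m \<ge> 1"
  shows "\<Phi> v \<ge> ip m (\<lambda>j. x j - v j) (\<lambda>j. x j - v j) / (4 * \<gamma>) - \<bar>l0\<bar> * \<bar>x m\<bar> - \<gamma> * l0\<^sup>2"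
proof -
  define d where "d = (\<lambda>j. x j - v j)"
  have mm: "m \<in> {1..m}" using m by simp
  have "l1 * (\<Sum>l\<in>Lset m n i. (ip m (brow m w l) v)\<^sup>2) \<ge> 0" "l2 * ip m v v \<ge> 0"
    using l1 l2 ip_self_nonneg by (auto intro!: mult_nonneg_nonneg sum_nonneg)
  moreover have "ip m (ev m) v = v m" using ip_ev_right[OF mm, of v] ip_commute[of m v] by simp
  ultimately have r: "rfun l0 l1 l2 m w n i v \<ge> - \<bar>l0\<bar> * \<bar>v m\<bar>"
    unfolding rfun_def by (auto simp: abs_mult[symmetric])
  have "- \<bar>l0\<bar> * \<bar>v m\<bar> \<ge> - \<bar>l0\<bar> * \<bar>x m\<bar> - \<bar>l0\<bar> * \<bar>d m\<bar>"
    using mult_left_mono[of "\<bar>v m\<bar>" "\<bar>x m\<bar> + \<bar>d m\<bar>" "\<bar>l0\<bar>"] unfolding d_def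
    by (simp add: algebra_simps)
  moreover have "\<bar>l0\<bar> * \<bar>d m\<bar> \<le> (d m)\<^sup>2 / (4 * \<gamma>) + \<gamma> * l0\<^sup>2"
    using mult_le_sq_div_add_sq[OF \<gamma>, of "\<bar>d m\<bar>" "\<bar>l0\<bar>"] by (simp add: mult.commute)
  moreover have "(d m)\<^sup>2 / (4 * \<gamma>) \<le> ip m d d / (4 * \<gamma>)"
    using square_le_ip_self[OF mm] \<gamma> by (simp add: divide_right_mono)
  moreover have "ip m d d / (4 * \<gamma>) \<ge> 0" using ip_self_nonneg \<gamma> by simp
  ultimately show ?thesis using r unfolding prox_objective_def d_def[symmetric] by linarith
qed

lemma prox_objective_rfun_coercive:
  assumes m: "m \<ge> 1"
  obtains R where "R \<ge> 0" "\<And>v. v \<in> vecs m \<Longrightarrow> \<exists>j\<in>{1..m}. \<bar>v j - x j\<bar> > R \<Longrightarrow> \<Phi> v > \<Phi> x"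
proof
  define C where "C = \<Phi> x + \<bar>l0\<bar> * \<bar>x m\<bar> + \<gamma> * l0\<^sup>2"
  define R where "R = 1 + 4 * \<gamma> * \<bar>C\<bar>"
  show "R \<ge> 0" unfolding R_def using \<gamma> by simp
  fix v assume v: "v \<in> vecs m" and "\<exists>j\<in>{1..m}. \<bar>v j - x j\<bar> > R"
  then obtain j where j: "j \<in> {1..m}" "\<bar>x j - v j\<bar> > R" by force
  define d where "d = (\<lambda>j. x j - v j)"
  have "R \<ge> 1" unfolding R_def using \<gamma> by simp
  then have "\<bar>d j\<bar> * 1 \<le> \<bar>d j\<bar> * \<bar>d j\<bar>" using j by (intro mult_left_mono) (auto simp: d_def)
  then have "(d j)\<^sup>2 > R" using j by (simp add: d_def power2_eq_square abs_mult[symmetric])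
  then have "ip m d d > 4 * \<gamma> * \<bar>C\<bar>" using square_le_ip_self[OF j(1), of d] unfolding R_def by linarith
  moreover have "4 * \<gamma> * C \<le> 4 * \<gamma> * \<bar>C\<bar>" using \<gamma> by (intro mult_left_mono) auto
  ultimately have "ip m d d > 4 * \<gamma> * C" by linarith
  then have "ip m d d / (4 * \<gamma>) > C" using \<gamma> by (simp add: field_simps)
  then show "\<Phi> v > \<Phi> x"
    using prox_objective_rfun_lower_bound[OF v m] unfolding C_def d_def by linarith
qed

lemma continuous_on_prox_objective_rfun: "continuous_on UNIV \<Phi>"
  unfolding prox_objective_def[abs_def] rfun_def ip_def using \<gamma>
  by (cases "i = 1") (simp_all, (intro continuous_intros continuous_on_product_coordinates; simp)+)

lemma prox_rfun_strict_min:
  assumes x: "x \<in> vecs m" and m: "m \<ge> 1"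
  defines "u \<equiv> prox m \<gamma> (rfun l0 l1 l2 m w n i) x"
  shows "u \<in> vecs m" "\<forall>v\<in>vecs m. \<Phi> u < \<Phi> v \<or> v = u"
proof -
  obtain R where "R \<ge> 0" "\<And>v. v \<in> vecs m \<Longrightarrow> \<exists>j\<in>{1..m}. \<bar>v j - x j\<bar> > R \<Longrightarrow> \<Phi> v > \<Phi> x"
    using prox_objective_rfun_coercive[OF m] by blast
  then obtain u' where u': "u' \<in> vecs m" "\<forall>v\<in>vecs m. \<Phi> u' \<le> \<Phi> v"
    using continuous_coercive_attains_min_vecs[OF continuous_on_prox_objective_rfun x] by blast
  have strict: "\<forall>v\<in>vecs m. \<Phi> u' < \<Phi> v \<or> v = u'"
  proof (intro ballI disjCI)
    fix v assume v: "v \<in> vecs m" and "v \<noteq> u'"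
    then have "\<Phi> (\<lambda>j. (u' j + v j) / 2) < (\<Phi> u' + \<Phi> v) / 2"
      using prox_objective_rfun_midpoint_less[OF u'(1)] by auto
    moreover have "(\<lambda>j. (u' j + v j) / 2) \<in> vecs m" using u'(1) v unfolding vecs_def by auto
    ultimately show "\<Phi> u' < \<Phi> v" using u'(2) by fastforce
  qed
  have "u = u'" unfolding u_def by (rule prox_eqI[OF u'(1) strict])
  then show "u \<in> vecs m" "\<forall>v\<in>vecs m. \<Phi> u < \<Phi> v \<or> v = u" using u'(1) strict by simp_all
qed

lemma prox_rfun_last_coords:
  assumes x: "x \<in> last_coords m b" and bm: "b < m" and bL: "b \<notin> Lset m n i"
    and i1: "i = 1 \<Longrightarrow> b \<ge> 1"
  shows "prox m \<gamma> (rfun l0 l1 l2 m w n i) x \<in> last_coords m b"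
proof -
  define u where "u = prox m \<gamma> (rfun l0 l1 l2 m w n i) x"
  have m: "m \<ge> 1" using bm by simp
  have u: "u \<in> vecs m" "\<forall>v\<in>vecs m. \<Phi> u < \<Phi> v \<or> v = u"
    using prox_rfun_strict_min[OF _ m] x last_coords_subset_vecs unfolding u_def by blast+
  define u' where "u' = (\<lambda>j. if m - b < j then u j else 0)"
  have u'_vecs: "u' \<in> vecs m" using u(1) unfolding u'_def vecs_def by auto
  have "l1 * (\<Sum>l\<in>Lset m n i. (ip m (brow m w l) u')\<^sup>2) \<le> l1 * (\<Sum>l\<in>Lset m n i. (ip m (brow m w l) u)\<^sup>2)"
    using l1 bL bm unfolding u'_def
    by (intro mult_left_mono sum_mono ip_brow_truncate_square_le) (auto dest: subsetD[OF Lset_subset])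
  moreover have "l2 * ip m u' u' \<le> l2 * ip m u u"
    using l2 unfolding ip_def u'_def by (intro mult_left_mono sum_mono) auto
  moreover have "i = 1 \<Longrightarrow> ip m (ev m) u' = ip m (ev m) u"
    using i1 bm ip_ev_right[of m m] ip_commute[of m "ev m"] unfolding u'_def by auto
  moreover have "ip m (\<lambda>j. x j - u' j) (\<lambda>j. x j - u' j) \<le> ip m (\<lambda>j. x j - u j) (\<lambda>j. x j - u j)"
    unfolding ip_def using x unfolding u'_def last_coords_def by (intro sum_mono) auto
  then have "ip m (\<lambda>j. x j - u' j) (\<lambda>j. x j - u' j) / (2 * \<gamma>) \<le> ip m (\<lambda>j. x j - u j) (\<lambda>j. x j - u j) / (2 * \<gamma>)"
    using \<gamma> by (simp add: divide_right_mono)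
  ultimately have "\<Phi> u' \<le> \<Phi> u" unfolding prox_objective_def rfun_def by (cases "i = 1") auto
  then have "u' = u" using u(2) u'_vecs by force
  then have "u \<in> last_coords m b"
    using u(1) unfolding last_coords_def vecs_def u'_def by (auto simp: fun_eq_iff) (metis not_less)
  then show ?thesis unfolding u_def .
qed

end

lemma rfun_oracles_last_coords:
  assumes x: "x \<in> last_coords m b" and bm: "b < m" and i: "i \<in> {1..n}" and n: "n \<ge> 2"
    and i_not_next: "i mod n \<noteq> Suc b mod n" and \<gamma>: "\<gamma> > 0" and l1: "l1 \<ge> 0" and l2: "l2 \<ge> 0"
  shows "grad m (rfun l0 l1 l2 m w n i) x \<in> last_coords m b"
    and "prox m \<gamma> (rfun l0 l1 l2 m w n i) x \<in> last_coords m b"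
proof -
  have bL: "b \<notin> Lset m n i"
  proof
    assume "b \<in> Lset m n i"
    then have "Suc b mod n = Suc (i - 1) mod n" unfolding Lset_def by (metis (mono_tags) mem_Collect_eq mod_Suc_eq)
    then show False using i_not_next i by simp
  qed
  have i1: "b \<ge> 1" if "i = 1" using i_not_next that by (cases b) auto
  have "grad m (rfun l0 l1 l2 m w n i) x = rfun_grad l0 l1 l2 m w n i x"
    using grad_rfun[of x m] x last_coords_subset_vecs[of m b] bm by auto
  then show "grad m (rfun l0 l1 l2 m w n i) x \<in> last_coords m b"
    using rfun_grad_last_coords[OF x bm bL i1] by simp
  show "prox m \<gamma> (rfun l0 l1 l2 m w n i) x \<in> last_coords m b"
    by (rule prox_rfun_last_coords[OF \<gamma> l1 l2 x bm bL i1])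
qed

section \<open>Hitting times\<close>

definition hitting_time :: "nat \<Rightarrow> (nat \<Rightarrow> nat) \<Rightarrow> nat \<Rightarrow> enat" where
  "hitting_time n a k = Tk n (\<lambda>t (_::unit). a t) k ()"

lemma Tk_eq_hitting_time: "Tk n idx k \<omega> = hitting_time n (\<lambda>t. idx t \<omega>) k"
  unfolding hitting_time_def by (induction k) simp_all

lemma hitting_time_0 [simp]: "hitting_time n a 0 = 0"
  unfolding hitting_time_def by simp

lemma hitting_time_Suc:
  "hitting_time n a (Suc k) =
     (if \<exists>t. enat t > hitting_time n a k \<and> a t mod n = Suc k mod n
      then enat (LEAST t. enat t > hitting_time n a k \<and> a t mod n = Suc k mod n) else \<infinity>)"
  unfolding hitting_time_def by simp

lemma hitting_time_Suc_eq_enat_iff: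
  "hitting_time n a (Suc k) = enat s \<longleftrightarrow>
     (\<exists>r<s. hitting_time n a k = enat r \<and> (\<forall>j. r < j \<and> j < s \<longrightarrow> a j mod n \<noteq> Suc k mod n)
        \<and> a s mod n = Suc k mod n)"
proof -
  define P where "P t \<longleftrightarrow> enat t > hitting_time n a k \<and> a t mod n = Suc k mod n" for t
  show ?thesis
  proof
    assume H: "hitting_time n a (Suc k) = enat s"
    then have ex: "\<exists>t. P t" unfolding hitting_time_Suc P_def by (auto split: if_splits)
    then have s: "s = (LEAST t. P t)" using H unfolding hitting_time_Suc P_def by simp
    have "P s" unfolding s by (rule LeastI_ex[OF ex])
    moreover have "\<not> P j" if "j < s" for j using not_less_Least[of j P] that s by simp
    ultimately show "\<exists>r<s. hitting_time n a k = enat r \<and> (\<forall>j. r < j \<and> j < s \<longrightarrow> a j mod n \<noteq> Suc k mod n)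
        \<and> a s mod n = Suc k mod n"
      unfolding P_def by (cases "hitting_time n a k") auto
  next
    assume "\<exists>r<s. hitting_time n a k = enat r \<and> (\<forall>j. r < j \<and> j < s \<longrightarrow> a j mod n \<noteq> Suc k mod n)
        \<and> a s mod n = Suc k mod n"
    then obtain r where r: "r < s" "hitting_time n a k = enat r"
      "\<forall>j. r < j \<and> j < s \<longrightarrow> a j mod n \<noteq> Suc k mod n" "a s mod n = Suc k mod n" by blast
    have "P s" using r unfolding P_def by simp
    moreover have "(LEAST t. P t) = s"
    proof (rule Least_equality[where P = P, OF \<open>P s\<close>])
      fix y assume "P y"
      then have "r < y" "a y mod n = Suc k mod n" using r unfolding P_def by auto
      then show "s \<le> y" using r(3) by (meson not_le)
    qed
    ultimately show "hitting_time n a (Suc k) = enat s" unfolding hitting_time_Suc P_def by auto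
  qed
qed

lemma hitting_time_eq_enat_cong:
  assumes "\<And>j. j \<in> {1..r} \<Longrightarrow> a j = b j"
  shows "hitting_time n a k = enat r \<longleftrightarrow> hitting_time n b k = enat r"
  using assms
proof (induction k arbitrary: r)
  case (Suc k)
  have "\<And>r'. r' < r \<Longrightarrow> hitting_time n a k = enat r' \<longleftrightarrow> hitting_time n b k = enat r'"
    using Suc by (intro Suc.IH) auto
  moreover have "\<And>r' j. r' < j \<Longrightarrow> j \<le> r \<Longrightarrow> a j = b j" using Suc.prems by auto
  ultimately show ?case unfolding hitting_time_Suc_eq_enat_iff
    by (smt (verit, best) less_imp_le_nat order_refl)
qed simp

lemma hitting_time_restrict_eq_enat_iff:
  "r \<le> s \<Longrightarrow> hitting_time n (restrict a {1..s}) k = enat r \<longleftrightarrow> hitting_time n a k = enat r"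
  by (rule hitting_time_eq_enat_cong) auto

lemma hitting_time_mono: "j \<le> k \<Longrightarrow> hitting_time n a j \<le> hitting_time n a k"
proof (induction k)
  case (Suc k)
  have "hitting_time n a k \<le> hitting_time n a (Suc k)"
    using hitting_time_Suc_eq_enat_iff[of n a k] by (cases "hitting_time n a (Suc k)") force+
  then show ?case using Suc by (metis le_Suc_eq order.trans order_refl)
qed simp

lemma hitting_time_gap:
  assumes "hitting_time n a k < enat s" "enat s < hitting_time n a (Suc k)"
  shows "a s mod n \<noteq> Suc k mod n"
proof
  define P where "P t \<longleftrightarrow> enat t > hitting_time n a k \<and> a t mod n = Suc k mod n" for t
  assume "a s mod n = Suc k mod n"
  then have "P s" using assms unfolding P_def by simp
  then have "hitting_time n a (Suc k) \<le> enat s"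
    using Least_le[of P s] unfolding hitting_time_Suc P_def[symmetric] by auto
  then show False using assms(2) by simp
qed

lemma hitting_time_locate:
  assumes "1 \<le> s" "enat s \<le> hitting_time n a k"
  obtains j where "1 \<le> j" "j \<le> k" "hitting_time n a (j - 1) < enat s" "enat s \<le> hitting_time n a j"
proof -
  define j where "j = (LEAST j. enat s \<le> hitting_time n a j)"
  have "enat s \<le> hitting_time n a j" unfolding j_def by (rule LeastI[of _ k]) fact
  moreover have "j \<le> k" unfolding j_def by (rule Least_le) fact
  moreover have "j \<noteq> 0" using calculation assms(1) by (intro notI) (simp add: zero_enat_def)
  moreover have "\<not> enat s \<le> hitting_time n a (j - 1)"
    using not_less_Least[of "j - 1" "\<lambda>j. enat s \<le> hitting_time n a j"] \<open>j \<noteq> 0\<close> unfolding j_def by simp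
  ultimately show ?thesis using that[of j] by (simp add: not_le)
qed

lemma oracle_outputs_last_coords:
  fixes a :: "nat \<Rightarrow> nat"
  assumes x: "x \<in> last_coords m (j - 1)" and j: "1 \<le> j" "j \<le> k" "k \<le> m"
    and s: "hitting_time n a (j - 1) < enat s" "enat s \<le> hitting_time n a j" "enat s < hitting_time n a k"
    and a: "a s \<in> {1..n}" and n: "n \<ge> 2" and \<gamma>: "\<gamma> > 0" and l1: "l1 \<ge> 0" and l2: "l2 \<ge> 0"
  shows "grad m (rfun l0 l1 l2 m w n (a s)) x \<in> last_coords m (k - 1)
       \<and> prox m \<gamma> (rfun l0 l1 l2 m w n (a s)) x \<in> last_coords m (k - 1)"
proof (cases "enat s = hitting_time n a j")
  case True
  obtain j' where j': "j = Suc j'" using j by (cases j) auto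
  have "a s mod n = j mod n" using True j' hitting_time_Suc_eq_enat_iff[of n a j' s] by auto
  moreover have "j mod n \<noteq> Suc j mod n" using n by (simp add: mod_Suc)
  ultimately have next_index: "a s mod n \<noteq> Suc j mod n" by simp
  have "j < k" using True s(3) hitting_time_mono[of k j n a] by (metis leD linorder_le_less_linear)
  moreover have "x \<in> last_coords m j" using x last_coords_mono[of "j - 1" j m] by auto
  ultimately have "grad m (rfun l0 l1 l2 m w n (a s)) x \<in> last_coords m j"
      "prox m \<gamma> (rfun l0 l1 l2 m w n (a s)) x \<in> last_coords m j"
    using rfun_oracles_last_coords[OF _ _ a n next_index \<gamma> l1 l2] j by simp_all
  moreover have "last_coords m j \<subseteq> last_coords m (k - 1)" using \<open>j < k\<close> by (intro last_coords_mono) simp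
  ultimately show ?thesis by blast
next
  case False
  then have "a s mod n \<noteq> Suc (j - 1) mod n" using s hitting_time_gap[of n a "j - 1" s] j by simp
  then have "grad m (rfun l0 l1 l2 m w n (a s)) x \<in> last_coords m (j - 1)"
      "prox m \<gamma> (rfun l0 l1 l2 m w n (a s)) x \<in> last_coords m (j - 1)"
    using rfun_oracles_last_coords[OF x _ a n _ \<gamma> l1 l2] j by simp_all
  moreover have "last_coords m (j - 1) \<subseteq> last_coords m (k - 1)" using j by (intro last_coords_mono) simp
  ultimately show ?thesis by blast
qed

lemma pifo_iterates_last_coords:
  fixes X :: "nat \<Rightarrow> nat \<Rightarrow> real" and a :: "nat \<Rightarrow> nat"
  assumes n: "n \<ge> 2" and l1: "l1 \<ge> 0" and l2: "l2 \<ge> 0"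
    and a: "\<forall>t\<ge>1. a t \<in> {1..n}" and \<gamma>: "\<forall>t\<ge>1. \<gamma> t > 0" and X0: "X 0 = (\<lambda>_. 0)"
    and pifo: "\<forall>t\<ge>1. X t \<in> lin_span
        ({X s | s. s < t}
         \<union> {grad m (rfun l0 l1 l2 m w n (a s)) (X (s - 1)) | s. 1 \<le> s \<and> s \<le> t}
         \<union> {prox m (\<gamma> s) (rfun l0 l1 l2 m w n (a s)) (X (s - 1)) | s. 1 \<le> s \<and> s \<le> t})"
    and k: "k \<in> {1..m}" and t: "enat t < hitting_time n a k"
  shows "X t \<in> last_coords m (k - 1)"
  using k t
proof (induction t arbitrary: k rule: less_induct)
  case (less t)
  show ?case
  proof (cases "t = 0")
    case True
    then show ?thesis using X0 unfolding last_coords_def by simp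
  next
    case False
    have oracles: "grad m (rfun l0 l1 l2 m w n (a s)) (X (s - 1)) \<in> last_coords m (k - 1)
        \<and> prox m (\<gamma> s) (rfun l0 l1 l2 m w n (a s)) (X (s - 1)) \<in> last_coords m (k - 1)"
      if s: "1 \<le> s" "s \<le> t" for s
    proof -
      have "enat s < hitting_time n a k" using s less.prems by (meson enat_ord_simps(1) le_less_trans)
      then obtain j where j: "1 \<le> j" "j \<le> k"
        "hitting_time n a (j - 1) < enat s" "enat s \<le> hitting_time n a j"
        using hitting_time_locate[OF s(1), of n a k] less_imp_le by blast
      have "enat (s - 1) < enat s" using s(1) by simp
      then have "enat (s - 1) < hitting_time n a j" using j(4) by (rule less_le_trans)
      moreover have "s - 1 < t" "j \<in> {1..m}" using s j less.prems(1) by auto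
      ultimately have "X (s - 1) \<in> last_coords m (j - 1)" using less.IH by blast
      moreover have "k \<le> m" "a s \<in> {1..n}" "\<gamma> s > 0" using less.prems(1) a \<gamma> s by auto
      ultimately show ?thesis
        using oracle_outputs_last_coords[OF _ j(1,2) _ j(3,4) \<open>enat s < _\<close> _ n _ l1 l2] by blast
    qed
    have earlier: "X s \<in> last_coords m (k - 1)" if "s < t" for s
      using less.IH[OF that] less.prems that by (meson enat_ord_simps(2) order.strict_trans)
    have "{X s | s. s < t}
         \<union> {grad m (rfun l0 l1 l2 m w n (a s)) (X (s - 1)) | s. 1 \<le> s \<and> s \<le> t}
         \<union> {prox m (\<gamma> s) (rfun l0 l1 l2 m w n (a s)) (X (s - 1)) | s. 1 \<le> s \<and> s \<le> t}
         \<subseteq> last_coords m (k - 1)"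
    proof (intro Un_least subsetI)
      fix y assume "y \<in> {X s | s. s < t}"
      then show "y \<in> last_coords m (k - 1)" using earlier by blast
    next
      fix y assume "y \<in> {grad m (rfun l0 l1 l2 m w n (a s)) (X (s - 1)) | s. 1 \<le> s \<and> s \<le> t}"
      then show "y \<in> last_coords m (k - 1)" using oracles by blast
    next
      fix y assume "y \<in> {prox m (\<gamma> s) (rfun l0 l1 l2 m w n (a s)) (X (s - 1)) | s. 1 \<le> s \<and> s \<le> t}"
      then show "y \<in> last_coords m (k - 1)" using oracles by blast
    qed
    then show ?thesis by (rule lin_span_last_coords) (use pifo False in auto)
  qed
qed

section \<open>Independence of blocks of indices\<close>

lemma sets_PiM_count_space_countable:
  assumes I: "finite I"
    and A: "A \<subseteq> space (PiM I (\<lambda>_. count_space (UNIV::'b::countable set)))"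
  shows "A \<in> sets (PiM I (\<lambda>_. count_space (UNIV::'b set)))"
proof -
  have sp: "space (PiM I (\<lambda>_. count_space (UNIV::'b set))) = PiE I (\<lambda>_. UNIV)"
    by (simp add: space_PiM)
  have "countable A"
    using A unfolding sp by (rule countable_subset) (intro countable_PiE I, auto)
  have "A = (\<Union>a\<in>A. PiE I (\<lambda>i. {a i}))"
  proof -
    have "PiE I (\<lambda>i. {a i}) = {a}" if "a \<in> A" for a
    proof -
      have "a \<in> PiE I (\<lambda>_. UNIV)" using that A sp by auto
      then show ?thesis by (auto simp: PiE_def extensional_def Pi_def fun_eq_iff) metis
    qed
    then show ?thesis by auto
  qed
  also have "\<dots> \<in> sets (PiM I (\<lambda>_. count_space (UNIV::'b set)))"
    by (rule sets.countable_UN''[OF \<open>countable A\<close>]) (rule sets_PiM_I_finite[OF I], simp)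
  finally show ?thesis .
qed

lemma measurable_PiM_count_space_countable:
  "finite I \<Longrightarrow> f \<in> measurable (PiM I (\<lambda>_. count_space (UNIV::'b::countable set))) (count_space UNIV)"
  unfolding measurable_def
  by (intro CollectI conjI ballI sets_PiM_count_space_countable) (simp_all add: Pi_def)

context prob_space
begin

lemma restrict_event:
  fixes X :: "'i \<Rightarrow> 'a \<Rightarrow> 'b::countable"
  assumes ind: "indep_vars (\<lambda>_. count_space UNIV) X I" and A: "A \<subseteq> I" "finite A"
  shows "{\<omega>\<in>space M. F (restrict (\<lambda>i. X i \<omega>) A)} \<in> events"
proof -
  have "(\<lambda>\<omega>. restrict (\<lambda>i. X i \<omega>) A) \<in> measurable M (PiM A (\<lambda>_. count_space (UNIV::'b set)))"
    using ind A by (intro measurable_restrict) (auto simp: indep_vars_def)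
  then have "F \<circ> (\<lambda>\<omega>. restrict (\<lambda>i. X i \<omega>) A) \<in> measurable M (count_space UNIV)"
    by (rule measurable_comp) (rule measurable_PiM_count_space_countable[OF A(2)])
  then have "(F \<circ> (\<lambda>\<omega>. restrict (\<lambda>i. X i \<omega>) A)) -` {True} \<inter> space M \<in> events"
    by (rule measurable_sets) simp
  moreover have "(F \<circ> (\<lambda>\<omega>. restrict (\<lambda>i. X i \<omega>) A)) -` {True} \<inter> space M
      = {\<omega>\<in>space M. F (restrict (\<lambda>i. X i \<omega>) A)}"
    by (rule set_eqI) (simp add: comp_def conj_commute)
  ultimately show ?thesis by simp
qed

lemma prob_restrict_conj:
  fixes X :: "'i \<Rightarrow> 'a \<Rightarrow> 'b::countable"
  assumes ind: "indep_vars (\<lambda>_. count_space UNIV) X I"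
    and AB: "A \<inter> B = {}" "A \<subseteq> I" "B \<subseteq> I" "finite A" "finite B"
  shows "prob {\<omega>\<in>space M. F (restrict (\<lambda>i. X i \<omega>) A) \<and> G (restrict (\<lambda>i. X i \<omega>) B)}
       = prob {\<omega>\<in>space M. F (restrict (\<lambda>i. X i \<omega>) A)} * prob {\<omega>\<in>space M. G (restrict (\<lambda>i. X i \<omega>) B)}"
proof -
  let ?F = "F \<circ> (\<lambda>\<omega>. restrict (\<lambda>i. X i \<omega>) A)"
  let ?G = "G \<circ> (\<lambda>\<omega>. restrict (\<lambda>i. X i \<omega>) B)"
  have "indep_var (count_space UNIV) ?F (count_space UNIV) ?G"
    by (rule indep_var_compose[OF indep_var_restrict[OF ind AB(1-3)]];
        rule measurable_PiM_count_space_countable; fact)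
  then have "prob ((\<lambda>x. (?F x, ?G x)) -` ({True} \<times> {True}) \<inter> space M)
     = prob (?F -` {True} \<inter> space M) * prob (?G -` {True} \<inter> space M)"
    by (rule indep_varD) simp_all
  moreover have "(\<lambda>x. (?F x, ?G x)) -` ({True} \<times> {True}) \<inter> space M
     = {\<omega>\<in>space M. F (restrict (\<lambda>i. X i \<omega>) A) \<and> G (restrict (\<lambda>i. X i \<omega>) B)}"
    by (rule set_eqI) (simp add: comp_def conj_commute conj_left_commute)
  moreover have "?F -` {True} \<inter> space M = {\<omega>\<in>space M. F (restrict (\<lambda>i. X i \<omega>) A)}"
    "?G -` {True} \<inter> space M = {\<omega>\<in>space M. G (restrict (\<lambda>i. X i \<omega>) B)}"
    by (rule set_eqI, simp add: comp_def conj_commute)+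
  ultimately show ?thesis by simp
qed

end

section \<open>Partial sums of independent geometric variables\<close>

text \<open>Success probability 0 is sent to \<infinity>, since \<open>geometric_pmf\<close> requires a positive one.\<close>

definition geometric_enat_pmf :: "real \<Rightarrow> enat pmf" where
  "geometric_enat_pmf q =
     (if 0 < q then map_pmf (\<lambda>k. enat (Suc k)) (geometric_pmf q) else return_pmf \<infinity>)"

lemma pmf_geometric_enat_pmf:
  assumes "0 \<le> q" "q \<le> 1"
  shows "pmf (geometric_enat_pmf q) (enat s) = (if 1 \<le> s then (1 - q) ^ (s - 1) * q else 0)"
proof (cases "0 < q")
  case True
  have inj: "inj (\<lambda>k. enat (Suc k))" by (auto intro: injI)
  show ?thesis
  proof (cases s)
    case 0
    then show ?thesis using True unfolding geometric_enat_pmf_def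
      by (auto intro!: pmf_map_outside simp: zero_enat_def)
  next
    case (Suc m)
    then show ?thesis using True assms unfolding geometric_enat_pmf_def by (simp add: pmf_map_inj'[OF inj])
  qed
next
  case False
  then show ?thesis using assms unfolding geometric_enat_pmf_def by simp
qed

lemma enat_add_eq_enat_iff: "(a::enat) + b = enat s \<longleftrightarrow> (\<exists>r\<le>s. a = enat r \<and> b = enat (s - r))"
  by (cases a; cases b) auto

lemma measure_Pi_pmf_component:
  assumes "finite A" "x \<in> A"
  shows "measure (measure_pmf (Pi_pmf A d G)) {\<nu>. \<nu> x = v} = pmf (G x) v"
proof -
  have "measure (measure_pmf (Pi_pmf A d G)) {\<nu>. \<nu> x = v}
      = measure (measure_pmf (map_pmf (\<lambda>f. f x) (Pi_pmf A d G))) {v}"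
    by (simp add: vimage_def)
  also have "\<dots> = pmf (G x) v" using assms by (simp add: Pi_pmf_component measure_pmf_single)
  finally show ?thesis .
qed

lemma measure_Pi_pmf_partial_sum_Suc:
  fixes G :: "nat \<Rightarrow> enat pmf"
  assumes "Suc j \<le> K"
  defines "N \<equiv> measure_pmf (Pi_pmf {1..K} 0 G)"
  shows "measure N {\<nu>. (\<Sum>l=1..Suc j. \<nu> l) = enat s}
       = (\<Sum>r\<le>s. measure N {\<nu>. (\<Sum>l=1..j. \<nu> l) = enat r} * pmf (G (Suc j)) (enat (s - r)))"
proof -
  interpret N: prob_space N unfolding N_def by (rule measure_pmf.prob_space_axioms)
  have ind: "N.indep_vars (\<lambda>_. count_space UNIV) (\<lambda>l \<nu>. \<nu> l) {1..K}"
    unfolding N_def by (rule indep_vars_Pi_pmf) simp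
  define B where "B r = {\<nu>. (\<Sum>l=1..j. \<nu> l) = enat r \<and> \<nu> (Suc j) = enat (s - r)}" for r
  have "{\<nu>. (\<Sum>l=1..Suc j. \<nu> l) = enat s} = (\<Union>r\<in>{..s}. B r)"
    unfolding B_def by (auto simp: sum.cl_ivl_Suc enat_add_eq_enat_iff)
  moreover have "disjoint_family_on B {..s}"
    unfolding disjoint_family_on_def B_def by auto
  ultimately have "measure N {\<nu>. (\<Sum>l=1..Suc j. \<nu> l) = enat s} = (\<Sum>r\<le>s. measure N (B r))"
    by (simp add: measure_finite_Union N_def)
  also have "\<dots> = (\<Sum>r\<le>s. measure N {\<nu>. (\<Sum>l=1..j. \<nu> l) = enat r} * pmf (G (Suc j)) (enat (s - r)))"
  proof (rule sum.cong[OF refl])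
    fix r
    have "N.prob {\<nu>\<in>space N. (\<lambda>f. (\<Sum>l=1..j. f l) = enat r) (restrict (\<lambda>l. \<nu> l) {1..j})
                   \<and> (\<lambda>f. f (Suc j) = enat (s - r)) (restrict (\<lambda>l. \<nu> l) {Suc j})}
       = N.prob {\<nu>\<in>space N. (\<lambda>f. (\<Sum>l=1..j. f l) = enat r) (restrict (\<lambda>l. \<nu> l) {1..j})}
         * N.prob {\<nu>\<in>space N. (\<lambda>f. f (Suc j) = enat (s - r)) (restrict (\<lambda>l. \<nu> l) {Suc j})}"
      by (rule N.prob_restrict_conj[OF ind]) (use assms(1) in auto)
    moreover have "(\<Sum>l=1..j. restrict (\<lambda>l. \<nu> l) {1..j} l) = (\<Sum>l=1..j. \<nu> l)" for \<nu> :: "nat \<Rightarrow> enat"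
      by (rule sum.cong) auto
    ultimately have "measure N (B r)
        = measure N {\<nu>. (\<Sum>l=1..j. \<nu> l) = enat r} * measure N {\<nu>. \<nu> (Suc j) = enat (s - r)}"
      unfolding B_def by (simp add: N_def)
    also have "measure N {\<nu>. \<nu> (Suc j) = enat (s - r)} = pmf (G (Suc j)) (enat (s - r))"
      unfolding N_def by (rule measure_Pi_pmf_component) (use assms(1) in auto)
    finally show "measure N (B r) = measure N {\<nu>. (\<Sum>l=1..j. \<nu> l) = enat r} * pmf (G (Suc j)) (enat (s - r))" .
  qed
  finally show ?thesis .
qed

lemma prob_space_enat_eqI:
  fixes \<mu> \<nu> :: "enat measure"
  assumes "prob_space \<mu>" "prob_space \<nu>" and sets: "sets \<mu> = UNIV" "sets \<nu> = UNIV"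
    and eq: "\<And>s. emeasure \<mu> {enat s} = emeasure \<nu> {enat s}"
  shows "\<mu> = \<nu>"
proof (rule measure_eqI_countable[where A=UNIV])
  interpret \<mu>: prob_space \<mu> by fact
  interpret \<nu>: prob_space \<nu> by fact
  show "sets \<mu> = Pow UNIV" "sets \<nu> = Pow UNIV" "countable (UNIV :: enat set)" using sets by auto
  have space: "space \<mu> = UNIV" "space \<nu> = UNIV"
    using sets.top[of \<mu>] sets.top[of \<nu>] sets.sets_into_space[of _ \<mu>] sets.sets_into_space[of _ \<nu>] sets
    by auto
  have "emeasure \<mu> (range enat) = (\<integral>\<^sup>+x. emeasure \<mu> {x} \<partial>count_space (range enat))"
    by (rule emeasure_countable_singleton) (use sets in auto)
  also have "\<dots> = (\<integral>\<^sup>+x. emeasure \<nu> {x} \<partial>count_space (range enat))"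
    by (rule nn_integral_cong) (auto simp: eq)
  also have "\<dots> = emeasure \<nu> (range enat)"
    by (rule emeasure_countable_singleton[symmetric]) (use sets in auto)
  finally have "measure \<mu> (range enat) = measure \<nu> (range enat)" by (simp add: measure_def)
  moreover have "UNIV - range enat = {\<infinity>}" by (auto simp: not_infinity_eq) (metis enat.exhaust rangeI)
  ultimately have "measure \<mu> {\<infinity>} = measure \<nu> {\<infinity>}"
    using \<mu>.prob_compl[of "range enat"] \<nu>.prob_compl[of "range enat"] sets space by simp
  then have "emeasure \<mu> {\<infinity>} = emeasure \<nu> {\<infinity>}"
    by (simp add: \<mu>.emeasure_eq_measure \<nu>.emeasure_eq_measure)
  then show "emeasure \<mu> {a} = emeasure \<nu> {a}" for a by (cases a) (simp_all add: eq)
qed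

lemma geometric_rv_Pi_pmf_component:
  assumes "finite A" "l \<in> A" "0 \<le> q l" "q l \<le> 1"
  shows "geometric_rv (measure_pmf (Pi_pmf A 0 (\<lambda>l. geometric_enat_pmf (q l)))) (q l) (\<lambda>\<nu>. \<nu> l)"
  unfolding geometric_rv_def
proof (intro conjI allI)
  fix s
  have "measure (Pi_pmf A 0 (\<lambda>l. geometric_enat_pmf (q l))) {\<nu>. \<nu> l = enat s}
      = pmf (geometric_enat_pmf (q l)) (enat s)"
    by (rule measure_Pi_pmf_component[OF assms(1,2)])
  then show "measure (Pi_pmf A 0 (\<lambda>l. geometric_enat_pmf (q l))) {\<nu> \<in> space (Pi_pmf A 0 (\<lambda>l. geometric_enat_pmf (q l))). \<nu> l = enat s}
      = (if 1 \<le> s then (1 - q l) ^ (s - 1) * q l else 0)"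
    using assms(3,4) by (simp add: pmf_geometric_enat_pmf)
qed simp

section \<open>The law of the hitting times\<close>

lemma range_mod_eq_Suc_mod_iff:
  assumes "n \<ge> 1" "v \<in> {1..n}"
  shows "v mod n = Suc j mod n \<longleftrightarrow> v = j mod n + 1"
proof (cases "v = n")
  case False
  then have "v < n" using assms by auto
  then show ?thesis using assms by (auto simp: mod_Suc)
qed (use assms in \<open>auto simp: mod_Suc\<close>)

context prob_space
begin

lemma hitting_time_eq_enat_event:
  assumes ind: "indep_vars (\<lambda>_. count_space UNIV) idx {1..}"
  shows "{\<omega>\<in>space M. hitting_time n (\<lambda>t. idx t \<omega>) k = enat r} \<in> events"
  using restrict_event[OF ind, of "{1..r}" "\<lambda>f. hitting_time n f k = enat r"]
  unfolding hitting_time_restrict_eq_enat_iff[OF order_refl] by simp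

lemma measurable_Tk:
  assumes ind: "indep_vars (\<lambda>_. count_space UNIV) idx {1..}"
  shows "Tk n idx k \<in> measurable M (count_space UNIV)"
proof (subst measurable_count_space_eq2_countable, intro conjI ballI)
  have fin: "Tk n idx k -` {enat r} \<inter> space M \<in> events" for r
    using hitting_time_eq_enat_event[OF ind, of n k r]
    by (simp add: Tk_eq_hitting_time vimage_def Int_def conj_commute)
  fix a :: enat
  show "Tk n idx k -` {a} \<inter> space M \<in> events"
  proof (cases a)
    case infinity
    then have "Tk n idx k -` {a} \<inter> space M = space M - (\<Union>r. Tk n idx k -` {enat r} \<inter> space M)"
      by (auto simp: not_infinity_eq)
    also have "\<dots> \<in> events" using fin by (intro sets.Diff sets.top sets.countable_UN'') auto
    finally show ?thesis .
  qed (use fin in simp)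
qed simp

lemma prob_hitting_time_Suc:
  fixes idx :: "nat \<Rightarrow> 'a \<Rightarrow> nat" and n k s :: nat
  assumes ind: "indep_vars (\<lambda>_. count_space UNIV) idx {1..}"
  defines "c \<equiv> Suc k mod n"
  shows "prob {\<omega>\<in>space M. hitting_time n (\<lambda>t. idx t \<omega>) (Suc k) = enat s}
     = (\<Sum>r<s. prob {\<omega>\<in>space M. hitting_time n (\<lambda>t. idx t \<omega>) k = enat r}
             * prob {\<omega>\<in>space M. (\<forall>j. r < j \<and> j < s \<longrightarrow> idx j \<omega> mod n \<noteq> c) \<and> idx s \<omega> mod n = c})"
proof -
  let ?hit = "\<lambda>r f. (\<forall>j. r < j \<and> j < s \<longrightarrow> f j mod n \<noteq> c) \<and> f s mod n = c"
  define A where "A r = {\<omega>\<in>space M. hitting_time n (restrict (\<lambda>t. idx t \<omega>) {1..r}) k = enat r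
       \<and> ?hit r (restrict (\<lambda>t. idx t \<omega>) {Suc r..s})}" for r
  have "{\<omega>\<in>space M. hitting_time n (\<lambda>t. idx t \<omega>) (Suc k) = enat s} = (\<Union>r\<in>{..<s}. A r)"
    unfolding A_def c_def hitting_time_Suc_eq_enat_iff hitting_time_restrict_eq_enat_iff[OF order_refl] by auto
  moreover have "A r \<in> events" if "r < s" for r
  proof -
    have "A r = {\<omega>\<in>space M. (\<lambda>f. hitting_time n f k = enat r \<and> ?hit r f) (restrict (\<lambda>t. idx t \<omega>) {1..s})}"
      using that hitting_time_restrict_eq_enat_iff[of r s]
      unfolding A_def hitting_time_restrict_eq_enat_iff[OF order_refl] by auto
    also have "\<dots> \<in> events" by (rule restrict_event[OF ind]) auto
    finally show ?thesis .
  qed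
  moreover have "disjoint_family_on A {..<s}"
    unfolding disjoint_family_on_def A_def hitting_time_restrict_eq_enat_iff[OF order_refl] by auto
  ultimately have "prob {\<omega>\<in>space M. hitting_time n (\<lambda>t. idx t \<omega>) (Suc k) = enat s} = (\<Sum>r<s. prob (A r))"
    by (simp add: measure_finite_Union image_subset_iff)
  also have "\<dots> = (\<Sum>r<s. prob {\<omega>\<in>space M. hitting_time n (\<lambda>t. idx t \<omega>) k = enat r}
             * prob {\<omega>\<in>space M. ?hit r (\<lambda>t. idx t \<omega>)})"
  proof (rule sum.cong[OF refl])
    fix r assume r: "r \<in> {..<s}"
    have "prob (A r) = prob {\<omega>\<in>space M. hitting_time n (restrict (\<lambda>t. idx t \<omega>) {1..r}) k = enat r}
        * prob {\<omega>\<in>space M. ?hit r (restrict (\<lambda>t. idx t \<omega>) {Suc r..s})}"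
      unfolding A_def by (rule prob_restrict_conj[OF ind]) auto
    also have "{\<omega>\<in>space M. hitting_time n (restrict (\<lambda>t. idx t \<omega>) {1..r}) k = enat r}
        = {\<omega>\<in>space M. hitting_time n (\<lambda>t. idx t \<omega>) k = enat r}"
      unfolding hitting_time_restrict_eq_enat_iff[OF order_refl] ..
    also have "{\<omega>\<in>space M. ?hit r (restrict (\<lambda>t. idx t \<omega>) {Suc r..s})} = {\<omega>\<in>space M. ?hit r (\<lambda>t. idx t \<omega>)}"
      using r by auto
    finally show "prob (A r) = prob {\<omega>\<in>space M. hitting_time n (\<lambda>t. idx t \<omega>) k = enat r}
        * prob {\<omega>\<in>space M. ?hit r (\<lambda>t. idx t \<omega>)}" .
  qed
  finally show ?thesis .
qed

lemma prob_first_hit: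
  fixes idx :: "nat \<Rightarrow> 'a \<Rightarrow> nat"
  assumes ind: "indep_vars (\<lambda>_. count_space UNIV) idx {1..}"
    and hit: "\<And>t. t \<ge> 1 \<Longrightarrow> prob {\<omega>\<in>space M. idx t \<omega> mod n = c} = q"
    and rs: "r < s"
  shows "prob {\<omega>\<in>space M. (\<forall>j. r < j \<and> j < s \<longrightarrow> idx j \<omega> mod n \<noteq> c) \<and> idx s \<omega> mod n = c}
       = (1 - q) ^ (s - Suc r) * q"
proof -
  define S where "S j = (if j = s then {v. v mod n = c} else {v. v mod n \<noteq> c})" for j
  have hit_event: "{\<omega>\<in>space M. idx j \<omega> mod n = c} \<in> events" if "j \<ge> 1" for j
  proof -
    have "idx j \<in> measurable M (count_space UNIV)" using ind that by (auto simp: indep_vars_def)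
    then have "idx j -` {v. v mod n = c} \<inter> space M \<in> events" by (rule measurable_sets) simp
    moreover have "idx j -` {v. v mod n = c} \<inter> space M = {\<omega>\<in>space M. idx j \<omega> mod n = c}" by auto
    ultimately show ?thesis by simp
  qed
  have "{\<omega>\<in>space M. (\<forall>j. r < j \<and> j < s \<longrightarrow> idx j \<omega> mod n \<noteq> c) \<and> idx s \<omega> mod n = c}
      = (\<Inter>j\<in>{Suc r..s}. idx j -` S j \<inter> space M)"
    using rs unfolding S_def by (auto split: if_splits)
  also have "prob \<dots> = (\<Prod>j\<in>{Suc r..s}. prob (idx j -` S j \<inter> space M))"
    by (rule indep_varsD[OF ind]) (use rs in auto)
  also have "\<dots> = (\<Prod>j\<in>insert s {Suc r..<s}. prob (idx j -` S j \<inter> space M))"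
    using rs by (intro prod.cong) auto
  also have "\<dots> = prob (idx s -` S s \<inter> space M) * (\<Prod>j\<in>{Suc r..<s}. prob (idx j -` S j \<inter> space M))"
    by (rule prod.insert) auto
  also have "prob (idx s -` S s \<inter> space M) = q"
  proof -
    have "idx s -` S s \<inter> space M = {\<omega>\<in>space M. idx s \<omega> mod n = c}" unfolding S_def by auto
    then show ?thesis using hit rs by simp
  qed
  also have "(\<Prod>j\<in>{Suc r..<s}. prob (idx j -` S j \<inter> space M)) = (\<Prod>j\<in>{Suc r..<s}. 1 - q)"
  proof (rule prod.cong[OF refl])
    fix j assume j: "j \<in> {Suc r..<s}"
    have "idx j -` S j \<inter> space M = space M - {\<omega>\<in>space M. idx j \<omega> mod n = c}"
      using j unfolding S_def by auto
    then show "prob (idx j -` S j \<inter> space M) = 1 - q"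
      using prob_compl[OF hit_event, of j] hit j by simp
  qed
  also have "\<dots> = (1 - q) ^ (s - Suc r)" by simp
  finally show ?thesis by (simp add: mult.commute)
qed

lemma prob_hitting_time_eq_geometric_sum:
  fixes idx :: "nat \<Rightarrow> 'a \<Rightarrow> nat" and q :: "nat \<Rightarrow> real"
  assumes ind: "indep_vars (\<lambda>_. count_space UNIV) idx {1..}"
    and hit: "\<And>t l. t \<ge> 1 \<Longrightarrow> l \<ge> 1 \<Longrightarrow> prob {\<omega>\<in>space M. idx t \<omega> mod n = l mod n} = q l"
    and q: "\<And>l. 0 \<le> q l \<and> q l \<le> 1" and "j \<le> K"
  defines "N \<equiv> measure_pmf (Pi_pmf {1..K} 0 (\<lambda>l. geometric_enat_pmf (q l)))"
  shows "prob {\<omega>\<in>space M. hitting_time n (\<lambda>t. idx t \<omega>) j = enat s} = measure N {\<nu>. (\<Sum>l=1..j. \<nu> l) = enat s}"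
  using \<open>j \<le> K\<close>
proof (induction j arbitrary: s)
  case 0
  interpret N: prob_space N unfolding N_def by (rule measure_pmf.prob_space_axioms)
  show ?case using N.prob_space prob_space by (simp add: zero_enat_def N_def)
next
  case (Suc j)
  let ?G = "\<lambda>l. geometric_enat_pmf (q l)"
  have "prob {\<omega>\<in>space M. hitting_time n (\<lambda>t. idx t \<omega>) (Suc j) = enat s}
     = (\<Sum>r<s. prob {\<omega>\<in>space M. hitting_time n (\<lambda>t. idx t \<omega>) j = enat r}
          * prob {\<omega>\<in>space M. (\<forall>i. r < i \<and> i < s \<longrightarrow> idx i \<omega> mod n \<noteq> Suc j mod n) \<and> idx s \<omega> mod n = Suc j mod n})"
    by (rule prob_hitting_time_Suc[OF ind])
  also have "\<dots> = (\<Sum>r<s. measure N {\<nu>. (\<Sum>l=1..j. \<nu> l) = enat r} * ((1 - q (Suc j)) ^ (s - Suc r) * q (Suc j)))"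
    using Suc prob_first_hit[OF ind hit] by (intro sum.cong) auto
  also have "\<dots> = (\<Sum>r<s. measure N {\<nu>. (\<Sum>l=1..j. \<nu> l) = enat r} * pmf (?G (Suc j)) (enat (s - r)))"
    using q[of "Suc j"] by (intro sum.cong) (auto simp: pmf_geometric_enat_pmf)
  also have "\<dots> = (\<Sum>r\<le>s. measure N {\<nu>. (\<Sum>l=1..j. \<nu> l) = enat r} * pmf (?G (Suc j)) (enat (s - r)))"
    using q[of "Suc j"] by (simp add: lessThan_Suc_atMost[symmetric] pmf_geometric_enat_pmf)
  also have "\<dots> = measure N {\<nu>. (\<Sum>l=1..Suc j. \<nu> l) = enat s}"
    unfolding N_def by (rule measure_Pi_pmf_partial_sum_Suc[symmetric]) (use Suc in simp)
  finally show ?case .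
qed

lemma distr_Tk_eq_distr_geometric_sum:
  fixes idx :: "nat \<Rightarrow> 'a \<Rightarrow> nat" and q :: "nat \<Rightarrow> real" and n k :: nat
  assumes ind: "indep_vars (\<lambda>_. count_space UNIV) idx {1..}"
    and hit: "\<And>t l. t \<ge> 1 \<Longrightarrow> l \<ge> 1 \<Longrightarrow> prob {\<omega>\<in>space M. idx t \<omega> mod n = l mod n} = q l"
    and q: "\<And>l. 0 \<le> q l \<and> q l \<le> 1"
  defines "N \<equiv> measure_pmf (Pi_pmf {1..k} 0 (\<lambda>l. geometric_enat_pmf (q l)))"
  shows "distr M (count_space UNIV) (Tk n idx k) = distr N (count_space UNIV) (\<lambda>\<nu>. \<Sum>l=1..k. \<nu> l)"
proof (rule prob_space_enat_eqI)
  interpret N: prob_space N unfolding N_def by (rule measure_pmf.prob_space_axioms)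
  show "prob_space (distr M (count_space UNIV) (Tk n idx k))"
    by (rule prob_space_distr[OF measurable_Tk[OF ind]])
  show "prob_space (distr N (count_space UNIV) (\<lambda>\<nu>. \<Sum>l=1..k. \<nu> l))"
    by (rule N.prob_space_distr) (simp add: N_def)
  fix s
  have "emeasure (distr M (count_space UNIV) (Tk n idx k)) {enat s} = emeasure M (Tk n idx k -` {enat s} \<inter> space M)"
    by (rule emeasure_distr[OF measurable_Tk[OF ind]]) simp
  also have "\<dots> = prob {\<omega>\<in>space M. hitting_time n (\<lambda>t. idx t \<omega>) k = enat s}"
    by (simp add: emeasure_eq_measure Tk_eq_hitting_time vimage_def Int_def conj_commute)
  also have "\<dots> = measure N {\<nu>. (\<Sum>l=1..k. \<nu> l) = enat s}"
    using prob_hitting_time_eq_geometric_sum[OF ind hit q, of k k s] unfolding N_def by simp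
  also have "\<dots> = emeasure N ((\<lambda>\<nu>. \<Sum>l=1..k. \<nu> l) -` {enat s} \<inter> space N)"
    by (simp add: measure_pmf.emeasure_eq_measure N_def vimage_def)
  also have "\<dots> = emeasure (distr N (count_space UNIV) (\<lambda>\<nu>. \<Sum>l=1..k. \<nu> l)) {enat s}"
    by (rule emeasure_distr[symmetric]) (simp_all add: N_def)
  finally show "emeasure (distr M (count_space UNIV) (Tk n idx k)) {enat s}
      = emeasure (distr N (count_space UNIV) (\<lambda>\<nu>. \<Sum>l=1..k. \<nu> l)) {enat s}" .
qed simp_all

end

lemma Tk_distributed_as_sum_of_geometric:
  fixes M :: "'a measure" and idx :: "nat \<Rightarrow> 'a \<Rightarrow> nat" and p :: "nat \<Rightarrow> real"
  assumes n: "n \<ge> 1" and P: "prob_space M"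
    and p_nonneg: "\<forall>j\<in>{1..n}. p j \<ge> 0" and p_sum: "(\<Sum>j=1..n. p j) = 1"
    and idx_range: "\<forall>t\<ge>1. \<forall>\<omega>\<in>space M. idx t \<omega> \<in> {1..n}"
    and idx_indep: "prob_space.indep_vars M (\<lambda>_. count_space UNIV) idx {1..}"
    and idx_distr: "\<forall>t\<ge>1. \<forall>j\<in>{1..n}. measure M {\<omega> \<in> space M. idx t \<omega> = j} = p j"
  shows "\<exists>(N :: (nat \<Rightarrow> enat) measure) Y.
            prob_space N
            \<and> prob_space.indep_vars N (\<lambda>_. count_space UNIV) Y {1..k}
            \<and> (\<forall>l\<in>{1..k}. geometric_rv N (p ((l - 1) mod n + 1)) (Y l))
            \<and> distr M (count_space UNIV) (Tk n idx k) = distr N (count_space UNIV) (\<lambda>\<nu>. \<Sum>l=1..k. Y l \<nu>)"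
proof -
  interpret M: prob_space M by fact
  define q where "q l = p ((l - 1) mod n + 1)" for l
  have q_range: "0 \<le> q l \<and> q l \<le> 1" for l
  proof -
    have "(l - 1) mod n + 1 \<in> {1..n}" using n by (auto simp: Suc_le_eq)
    moreover from this have "p ((l - 1) mod n + 1) \<le> (\<Sum>j=1..n. p j)"
      using p_nonneg by (intro member_le_sum) auto
    ultimately show ?thesis using p_nonneg p_sum unfolding q_def by auto
  qed
  have hit: "M.prob {\<omega>\<in>space M. idx t \<omega> mod n = l mod n} = q l" if "t \<ge> 1" "l \<ge> 1" for t l
  proof -
    obtain j where l: "l = Suc j" using \<open>l \<ge> 1\<close> by (cases l) auto
    have "{\<omega>\<in>space M. idx t \<omega> mod n = l mod n} = {\<omega>\<in>space M. idx t \<omega> = j mod n + 1}"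
      using idx_range that range_mod_eq_Suc_mod_iff[OF n] unfolding l by auto
    moreover have "j mod n + 1 \<in> {1..n}" using n by (auto simp: Suc_le_eq)
    ultimately show ?thesis using idx_distr that unfolding q_def l by simp
  qed
  define N where "N = measure_pmf (Pi_pmf {1..k} 0 (\<lambda>l. geometric_enat_pmf (q l)))"
  have "prob_space N" unfolding N_def by (rule measure_pmf.prob_space_axioms)
  moreover have "prob_space.indep_vars N (\<lambda>_. count_space UNIV) (\<lambda>l \<nu>. \<nu> l) {1..k}"
    unfolding N_def by (rule indep_vars_Pi_pmf) simp
  moreover have "geometric_rv N (q l) (\<lambda>\<nu>. \<nu> l)" if "l \<in> {1..k}" for l
    unfolding N_def using q_range that by (intro geometric_rv_Pi_pmf_component) auto
  moreover have "distr M (count_space UNIV) (Tk n idx k) = distr N (count_space UNIV) (\<lambda>\<nu>. \<Sum>l=1..k. \<nu> l)"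
    unfolding N_def by (rule M.distr_Tk_eq_distr_geometric_sum[OF idx_indep hit q_range])
  ultimately show ?thesis unfolding q_def by blast
qed

theorem corollary2p3:
  fixes n m :: nat and l0 l1 l2 w :: real
    and M :: "'a measure" and p :: "nat \<Rightarrow> real" and \<gamma> :: "nat \<Rightarrow> real"
    and idx :: "nat \<Rightarrow> 'a \<Rightarrow> nat"
    and x :: "'a \<Rightarrow> nat \<Rightarrow> (nat \<Rightarrow> real)"
  assumes n: "n \<ge> 2" and m: "m \<ge> 1"
    and l0: "l0 \<noteq> 0" and l1: "l1 > 0" and l2: "l2 \<ge> 0"
    and P: "prob_space M"
    and p_nonneg: "\<forall>j\<in>{1..n}. p j \<ge> 0" and p_sum: "(\<Sum>j=1..n. p j) = 1"
    and idx_range: "\<forall>t\<ge>1. \<forall>\<omega>\<in>space M. idx t \<omega> \<in> {1..n}"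
    and idx_indep: "prob_space.indep_vars M (\<lambda>_. count_space UNIV) idx {1..}"
    and idx_distr: "\<forall>t\<ge>1. \<forall>j\<in>{1..n}. measure M {\<omega> \<in> space M. idx t \<omega> = j} = p j"
    and gamma_pos: "\<forall>t\<ge>1. \<gamma> t > 0"
    and x0: "\<forall>\<omega>\<in>space M. x \<omega> 0 = (\<lambda>_. 0)"
    and pifo: "\<forall>\<omega>\<in>space M. \<forall>t\<ge>1. x \<omega> t \<in> lin_span
        ({x \<omega> s | s. s < t}
         \<union> {grad m (rfun l0 l1 l2 m w n (idx s \<omega>)) (x \<omega> (s - 1)) | s. 1 \<le> s \<and> s \<le> t}
         \<union> {prox m (\<gamma> s) (rfun l0 l1 l2 m w n (idx s \<omega>)) (x \<omega> (s - 1)) | s. 1 \<le> s \<and> s \<le> t})"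
  shows "(\<forall>\<omega>\<in>space M. \<forall>k\<in>{1..m}. \<forall>t. enat t < Tk n idx k \<omega> \<longrightarrow> x \<omega> t \<in> Fsp m (k - 1))
       \<and> (\<forall>k\<ge>1. \<exists>(N :: (nat \<Rightarrow> enat) measure) Y.
            prob_space N
            \<and> prob_space.indep_vars N (\<lambda>_. count_space UNIV) Y {1..k}
            \<and> (\<forall>l\<in>{1..k}. geometric_rv N (p ((l - 1) mod n + 1)) (Y l))
            \<and> distr M (count_space UNIV) (Tk n idx k)
                = distr N (count_space UNIV) (\<lambda>\<nu>. \<Sum>l=1..k. Y l \<nu>))"
proof (intro conjI ballI allI impI)
  fix \<omega> k t assume \<omega>: "\<omega> \<in> space M" and k: "k \<in> {1..m}" and t: "enat t < Tk n idx k \<omega>"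
  have "x \<omega> t \<in> last_coords m (k - 1)"
  proof (rule pifo_iterates_last_coords[OF n _ l2 _ gamma_pos _ _ k])
    show "l1 \<ge> 0" "\<forall>t\<ge>1. idx t \<omega> \<in> {1..n}" "x \<omega> 0 = (\<lambda>_. 0)"
      using l1 idx_range x0 \<omega> by auto
    show "enat t < hitting_time n (\<lambda>t. idx t \<omega>) k" using t by (simp add: Tk_eq_hitting_time)
  qed (use pifo \<omega> in blast)
  then show "x \<omega> t \<in> Fsp m (k - 1)" using last_coords_subset_Fsp by blast
next
  fix k :: nat
  show "\<exists>(N :: (nat \<Rightarrow> enat) measure) Y. prob_space N
            \<and> prob_space.indep_vars N (\<lambda>_. count_space UNIV) Y {1..k}
            \<and> (\<forall>l\<in>{1..k}. geometric_rv N (p ((l - 1) mod n + 1)) (Y l))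
            \<and> distr M (count_space UNIV) (Tk n idx k) = distr N (count_space UNIV) (\<lambda>\<nu>. \<Sum>l=1..k. Y l \<nu>)"
    using n by (intro Tk_distributed_as_sum_of_geometric[OF _ P p_nonneg p_sum idx_range idx_indep idx_distr]) simp
qed

end
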